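(* For every integer $d \ge 2$, there exist two monoids $H, H' \in \mathcal{C}_d$ with $\mathcal{L}(H) = \mathcal{L}(H')$ that are not isomorphic; that is, the system of sets of lengths does not characterize monoids in $\mathcal{C}_d$ up to isomorphism.
   Context: Monoids are commutative, cancellative, reduced. $\mathcal{C}_d$ is the collection of all rank-$d$ submonoids of free commutative monoids of finite rank (rank = rank of the Grothendieck group). For an atomic monoid $H$ and $x\in H$, $\mathsf{L}(x)$ is the set of all $n$ such that $x$ is a sum of $n$ atoms; $\mathcal{L}(H)=\{\mathsf{L}(x)\mid x\in H\}$ is the system of sets of lengths. *)

theory Defs
  imports Main "HOL-Library.Function_Algebras"
begin

text \<open>Elements of the free commutative monoid N^n are modelled as functions
  nat => nat vanishing outside {..<n}; addition is pointwise.\<close>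

definition submonoid_of_free :: "nat \<Rightarrow> (nat \<Rightarrow> nat) set \<Rightarrow> bool" where
  "submonoid_of_free n H \<longleftrightarrow>
     H \<subseteq> {x. \<forall>i\<ge>n. x i = 0} \<and> (0::nat \<Rightarrow> nat) \<in> H \<and>
     (\<forall>x\<in>H. \<forall>y\<in>H. x + y \<in> H)"

definition groth_group :: "(nat \<Rightarrow> nat) set \<Rightarrow> (nat \<Rightarrow> int) set" where
  "groth_group H = {(\<lambda>i. int (x i) - int (y i)) | x y. x \<in> H \<and> y \<in> H}"

definition int_lin_indep :: "(nat \<Rightarrow> int) list \<Rightarrow> bool" where
  "int_lin_indep vs \<longleftrightarrow>
     (\<forall>c :: nat \<Rightarrow> int. (\<forall>i. (\<Sum>j<length vs. c j * (vs ! j) i) = 0) \<longrightarrow>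
        (\<forall>j<length vs. c j = 0))"

definition has_rank :: "(nat \<Rightarrow> nat) set \<Rightarrow> nat \<Rightarrow> bool" where
  "has_rank H d \<longleftrightarrow>
     (\<exists>vs. length vs = d \<and> set vs \<subseteq> groth_group H \<and> int_lin_indep vs) \<and>
     (\<forall>vs. set vs \<subseteq> groth_group H \<and> int_lin_indep vs \<longrightarrow> length vs \<le> d)"

definition in_C :: "nat \<Rightarrow> (nat \<Rightarrow> nat) set \<Rightarrow> bool" where
  "in_C d H \<longleftrightarrow> (\<exists>n. submonoid_of_free n H) \<and> has_rank H d"

definition atoms :: "(nat \<Rightarrow> nat) set \<Rightarrow> (nat \<Rightarrow> nat) set" where
  "atoms H = {a \<in> H. a \<noteq> 0 \<and> \<not> (\<exists>b\<in>H. \<exists>c\<in>H. b \<noteq> 0 \<and> c \<noteq> 0 \<and> a = b + c)}"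

definition lengths :: "(nat \<Rightarrow> nat) set \<Rightarrow> (nat \<Rightarrow> nat) \<Rightarrow> nat set" where
  "lengths H x = {k. \<exists>as. length as = k \<and> set as \<subseteq> atoms H \<and> sum_list as = x}"

definition system_of_lengths :: "(nat \<Rightarrow> nat) set \<Rightarrow> nat set set" where
  "system_of_lengths H = lengths H ` H"

definition monoid_iso :: "(nat \<Rightarrow> nat) set \<Rightarrow> (nat \<Rightarrow> nat) set \<Rightarrow> bool" where
  "monoid_iso H H' \<longleftrightarrow>
     (\<exists>f. bij_betw f H H' \<and> (\<forall>x\<in>H. \<forall>y\<in>H. f (x + y) = f x + f y))"

end

theory Submission
  imports Defs
begin

(* Compare N^d with its submonoid H = {x in N^d. x_0 + x_1 even}; both have rank d, as they
   contain 2 e_j for every j. Both are half-factorial: the atoms of N^d are the unit vectors,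
   of total degree 1, and the atoms of H are exactly its elements of weight 2 for the additive
   weight x_0 + x_1 + 2 (x_2 + ... + x_(d-1)). So every set of lengths is a singleton {k}, and
   every k occurs, in both monoids. But N^d is factorial, while the atoms e_0 + e_1, 2 e_0 and
   2 e_1 of H satisfy (e_0 + e_1) + (e_0 + e_1) = 2 e_0 + 2 e_1: a sum of two atoms of H does
   not determine its summands, and an isomorphism would have to preserve this. *)

lemma supported_vectors_dependent:
  fixes v :: "'a \<Rightarrow> nat \<Rightarrow> 'b::idom"
  assumes "finite J" "n < card J" "\<And>j i. j \<in> J \<Longrightarrow> n \<le> i \<Longrightarrow> v j i = 0"
  shows "\<exists>c. (\<forall>i. (\<Sum>j\<in>J. c j * v j i) = 0) \<and> (\<exists>j\<in>J. c j \<noteq> 0)"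
  using assms
proof (induction n arbitrary: J v)
  case 0
  then obtain j where "j \<in> J" by fastforce
  with 0 show ?case by (intro exI[of _ "\<lambda>_. 1"]) auto
next
  case (Suc n)
  show ?case
  proof (cases "\<forall>j\<in>J. v j n = 0")
    case True
    with Suc.prems have "\<And>j i. j \<in> J \<Longrightarrow> n \<le> i \<Longrightarrow> v j i = 0"
      by (metis le_eq_less_or_eq Suc_le_eq)
    with Suc show ?thesis by fastforce
  next
    case False
    then obtain k where k: "k \<in> J" "v k n \<noteq> 0" by auto
    \<comment> \<open>Gaussian elimination of coordinate n against v k.\<close>
    define w where "w j i = v k n * v j i - v j n * v k i" for j i
    have "n < card (J - {k})" using Suc.prems k by auto
    moreover have "w j i = 0" if "j \<in> J - {k}" "n \<le> i" for j i
      using Suc.prems(3) k(1) that by (cases "i = n") (auto simp: w_def Suc_le_eq)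
    ultimately obtain c' where c': "\<forall>i. (\<Sum>j\<in>J - {k}. c' j * w j i) = 0" "\<exists>j\<in>J - {k}. c' j \<noteq> 0"
      using Suc.IH[of "J - {k}" w] Suc.prems(1) by auto
    define c where "c j = (if j = k then - (\<Sum>j\<in>J - {k}. c' j * v j n) else c' j * v k n)" for j
    have "(\<Sum>j\<in>J. c j * v j i) = (\<Sum>j\<in>J - {k}. c' j * w j i)" for i
    proof -
      have "(\<Sum>j\<in>J. c j * v j i) = c k * v k i + (\<Sum>j\<in>J - {k}. c j * v j i)"
        using k Suc.prems(1) by (simp add: sum.remove)
      also have "\<dots> = (\<Sum>j\<in>J - {k}. c' j * w j i)"
        by (simp add: c_def w_def sum_distrib_right sum_subtractf right_diff_distrib
            mult.assoc mult.left_commute)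
      finally show ?thesis .
    qed
    moreover have "\<exists>j\<in>J. c j \<noteq> 0" using c'(2) k by (auto simp: c_def)
    ultimately show ?thesis using c'(1) by auto
  qed
qed

lemma int_lin_indep_length_le:
  assumes "int_lin_indep vs" "\<And>v i. v \<in> set vs \<Longrightarrow> n \<le> i \<Longrightarrow> v i = 0"
  shows "length vs \<le> n"
proof (rule ccontr)
  assume "\<not> length vs \<le> n"
  then obtain c where "\<forall>i. (\<Sum>j<length vs. c j * (vs ! j) i) = 0" "\<exists>j<length vs. c j \<noteq> 0"
    using supported_vectors_dependent[of "{..<length vs}" n "(!) vs"] assms(2) by auto
  with assms(1) show False unfolding int_lin_indep_def by blast
qed

lemma groth_group_supported:
  assumes "submonoid_of_free n H" "v \<in> groth_group H" "n \<le> i"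
  shows "v i = 0"
proof -
  obtain x y where "x \<in> H" "y \<in> H" "v = (\<lambda>i. int (x i) - int (y i))"
    using assms(2) unfolding groth_group_def by blast
  moreover have "x i = 0" "y i = 0"
    using assms(1,3) \<open>x \<in> H\<close> \<open>y \<in> H\<close> unfolding submonoid_of_free_def by blast+
  ultimately show ?thesis by simp
qed

lemma mem_groth_group:
  assumes "0 \<in> H" "x \<in> H"
  shows "(\<lambda>i. int (x i)) \<in> groth_group H"
proof -
  have "(\<lambda>i. int (x i)) = (\<lambda>i. int (x i) - int ((0::nat \<Rightarrow> nat) i))" by simp
  with assms show ?thesis unfolding groth_group_def by blast
qed

lemma has_rank_if_meets_all_axes:
  assumes "submonoid_of_free n H"
    and "\<And>j. j < n \<Longrightarrow> \<exists>x\<in>H. x j \<noteq> 0 \<and> (\<forall>i. i \<noteq> j \<longrightarrow> x i = 0)"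
  shows "has_rank H n"
proof -
  obtain x where x: "\<And>j. j < n \<Longrightarrow> x j \<in> H \<and> x j j \<noteq> 0 \<and> (\<forall>i. i \<noteq> j \<longrightarrow> x j i = 0)"
    using assms(2) by metis
  define vs where "vs = map (\<lambda>j i. int (x j i)) [0..<n]"
  have "set vs \<subseteq> groth_group H"
    using assms(1) x mem_groth_group unfolding submonoid_of_free_def by (auto simp: vs_def)
  moreover have "int_lin_indep vs"
    unfolding int_lin_indep_def
  proof (intro allI impI)
    fix c :: "nat \<Rightarrow> int" and j
    assume rel: "\<forall>i. (\<Sum>k<length vs. c k * (vs ! k) i) = 0" and "j < length vs"
    then have "j < n" by (simp add: vs_def)
    have "(\<Sum>k<length vs. c k * (vs ! k) j) = (\<Sum>k<n. c k * int (x k j))"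
      by (simp add: vs_def)
    also have "\<dots> = (\<Sum>k<n. if k = j then c j * int (x j j) else 0)"
      by (rule sum.cong) (use x in auto)
    also have "\<dots> = c j * int (x j j)" using \<open>j < n\<close> by simp
    finally have "(\<Sum>k<length vs. c k * (vs ! k) j) = c j * int (x j j)" .
    with rel x[OF \<open>j < n\<close>] show "c j = 0" by simp
  qed
  moreover have "length ws \<le> n" if "set ws \<subseteq> groth_group H" "int_lin_indep ws" for ws
    using that int_lin_indep_length_le groth_group_supported[OF assms(1)] by blast
  moreover have "length vs = n" by (simp add: vs_def)
  ultimately show ?thesis unfolding has_rank_def by blast
qed

lemma nonzero_coordE:
  fixes x :: "nat \<Rightarrow> nat"
  assumes "\<forall>i\<ge>n. x i = 0" "x \<noteq> 0"
  obtains i where "i < n" "x i \<noteq> 0"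
proof -
  from assms(2) obtain i where "x i \<noteq> 0" by (auto simp: fun_eq_iff)
  moreover from this assms(1) have "i < n" by (meson not_le)
  ultimately show thesis by (rule that[rotated])
qed

definition total_degree :: "nat \<Rightarrow> (nat \<Rightarrow> nat) \<Rightarrow> nat" where
  "total_degree n x = (\<Sum>i<n. x i)"

lemma total_degree_add: "total_degree n (x + y) = total_degree n x + total_degree n y"
  by (simp add: total_degree_def sum.distrib)

lemma total_degree_pos:
  assumes "\<forall>i\<ge>n. x i = 0" "x \<noteq> 0"
  shows "0 < total_degree n x"
proof -
  obtain i where "i < n" "x i \<noteq> 0" using nonzero_coordE[OF assms] .
  then have "x i \<le> total_degree n x" unfolding total_degree_def by (intro member_le_sum) auto
  with \<open>x i \<noteq> 0\<close> show ?thesis by simp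
qed

lemma sum_list_mem_submonoid:
  assumes "submonoid_of_free n H" "set xs \<subseteq> H"
  shows "sum_list xs \<in> H"
  using assms(2) by (induction xs) (use assms(1) in \<open>auto simp: submonoid_of_free_def\<close>)

lemma exists_atomic_factorization:
  assumes "submonoid_of_free n H" "x \<in> H"
  shows "\<exists>as. set as \<subseteq> atoms H \<and> sum_list as = x"
  using assms(2)
proof (induction "total_degree n x" arbitrary: x rule: less_induct)
  case less
  show ?case
  proof (cases "x = 0 \<or> x \<in> atoms H")
    case True
    then show ?thesis
      by (elim disjE) (rule exI[of _ "[]"], simp, rule exI[of _ "[x]"], simp)
  next
    case False
    with less.prems obtain b c where bc: "b \<in> H" "c \<in> H" "b \<noteq> 0" "c \<noteq> 0" "x = b + c"
      unfolding atoms_def by auto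
    have supp: "\<forall>i\<ge>n. y i = 0" if "y \<in> H" for y
      using assms(1) that unfolding submonoid_of_free_def by blast
    have "total_degree n b < total_degree n x" "total_degree n c < total_degree n x"
      using total_degree_pos[OF supp[OF bc(1)] bc(3)] total_degree_pos[OF supp[OF bc(2)] bc(4)]
      by (simp_all add: bc(5) total_degree_add)
    then obtain bs cs where
      "set bs \<subseteq> atoms H" "sum_list bs = b" "set cs \<subseteq> atoms H" "sum_list cs = c"
      using less.hyps bc(1,2) by blast
    with bc(5) show ?thesis by (intro exI[of _ "bs @ cs"]) auto
  qed
qed

lemma lengths_eq_weight_div:
  fixes w :: "(nat \<Rightarrow> nat) \<Rightarrow> nat"
  assumes "submonoid_of_free n H" "x \<in> H"
    and "\<And>x y. w (x + y) = w x + w y" "\<And>a. a \<in> atoms H \<Longrightarrow> w a = m" "0 < m"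
  shows "lengths H x = {w x div m}"
proof -
  have "w 0 = 0" using assms(3)[of 0 0] by simp
  then have weight: "w (sum_list as) = m * length as" if "set as \<subseteq> atoms H" for as
    using that by (induction as) (simp_all add: assms(3,4))
  have "k = w x div m" if "k \<in> lengths H x" for k
  proof -
    from that obtain as where "length as = k" "set as \<subseteq> atoms H" "sum_list as = x"
      unfolding lengths_def by blast
    with weight have "w x = m * k" by blast
    with assms(5) show ?thesis by simp
  qed
  then have "lengths H x \<subseteq> {w x div m}" by blast
  moreover obtain as where "set as \<subseteq> atoms H" "sum_list as = x"
    using exists_atomic_factorization[OF assms(1,2)] by blast
  then have "lengths H x \<noteq> {}" unfolding lengths_def by blast
  ultimately show ?thesis by (simp add: subset_singleton_iff)
qed

lemma system_of_lengths_eq_singletons: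
  fixes w :: "(nat \<Rightarrow> nat) \<Rightarrow> nat"
  assumes "submonoid_of_free n H" "a \<in> atoms H"
    and "\<And>x y. w (x + y) = w x + w y" "\<And>a. a \<in> atoms H \<Longrightarrow> w a = m" "0 < m"
  shows "system_of_lengths H = range (\<lambda>k. {k})"
proof -
  have singleton: "lengths H x = {w x div m}" if "x \<in> H" for x
    by (rule lengths_eq_weight_div[where w = w and m = m, OF assms(1) that assms(3-5)])
  have "{k} \<in> system_of_lengths H" for k
  proof -
    let ?x = "sum_list (replicate k a)"
    have "set (replicate k a) \<subseteq> atoms H" using assms(2) by auto
    moreover from this have "?x \<in> H"
      using sum_list_mem_submonoid[OF assms(1)] unfolding atoms_def by blast
    ultimately have "k \<in> lengths H ?x" "lengths H ?x \<in> system_of_lengths H"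
      unfolding lengths_def system_of_lengths_def by (auto intro!: exI[of _ "replicate k a"])
    with singleton[OF \<open>?x \<in> H\<close>] show ?thesis by simp
  qed
  moreover have "system_of_lengths H \<subseteq> range (\<lambda>k. {k})"
    unfolding system_of_lengths_def by (rule image_subsetI) (simp add: singleton)
  ultimately show ?thesis by blast
qed

lemma not_atom_if_proper_part:
  fixes x y :: "nat \<Rightarrow> nat"
  assumes "y \<in> H" "x - y \<in> H" "y \<le> x" "y \<noteq> 0" "y \<noteq> x"
  shows "x \<notin> atoms H"
proof -
  have "x = y + (x - y)" using assms(3) by (simp add: le_fun_def fun_eq_iff)
  moreover have "x - y \<noteq> 0"
  proof -
    obtain i where "y i \<noteq> x i" using assms(5) by (auto simp: fun_eq_iff)
    with assms(3) have "y i < x i" by (simp add: le_fun_def le_neq_implies_less)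
    then show ?thesis by (simp add: fun_eq_iff) (meson not_le)
  qed
  ultimately show ?thesis using assms(1,2,4) unfolding atoms_def by blast
qed

lemma atom_if_minimal_weight:
  fixes w :: "(nat \<Rightarrow> nat) \<Rightarrow> nat"
  assumes "\<And>x y. w (x + y) = w x + w y" "\<And>x. x \<in> H \<Longrightarrow> x \<noteq> 0 \<Longrightarrow> m \<le> w x" "0 < m"
    and "x \<in> H" "x \<noteq> 0" "w x = m"
  shows "x \<in> atoms H"
proof -
  have "\<not> (b \<in> H \<and> c \<in> H \<and> b \<noteq> 0 \<and> c \<noteq> 0 \<and> x = b + c)" for b c
  proof
    assume bc: "b \<in> H \<and> c \<in> H \<and> b \<noteq> 0 \<and> c \<noteq> 0 \<and> x = b + c"
    then have "w x = w b + w c" "m \<le> w b" "m \<le> w c" using assms(1,2) by auto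
    with assms(3,6) show False by linarith
  qed
  with assms(4,5) show ?thesis unfolding atoms_def by blast
qed

lemma monoid_iso_sym:
  assumes "monoid_iso H H'" "submonoid_of_free n H"
  shows "monoid_iso H' H"
proof -
  obtain f where f: "bij_betw f H H'" "\<And>x y. x \<in> H \<Longrightarrow> y \<in> H \<Longrightarrow> f (x + y) = f x + f y"
    using assms(1) unfolding monoid_iso_def by blast
  let ?g = "inv_into H f"
  have "?g (x + y) = ?g x + ?g y" if "x \<in> H'" "y \<in> H'" for x y
  proof -
    have "?g x \<in> H" "?g y \<in> H" "f (?g x) = x" "f (?g y) = y"
      using f(1) that by (auto simp: bij_betw_def inv_into_into f_inv_into_f)
    moreover from this have "?g x + ?g y \<in> H"
      using assms(2) unfolding submonoid_of_free_def by blast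
    ultimately show ?thesis
      using f by (metis bij_betw_imp_inj_on inv_into_f_f)
  qed
  then show ?thesis unfolding monoid_iso_def using bij_betw_inv_into[OF f(1)] by blast
qed

lemma additive_bij_image_atom:
  assumes "bij_betw f H H'" "\<And>x y. x \<in> H \<Longrightarrow> y \<in> H \<Longrightarrow> f (x + y) = f x + f y"
    and "submonoid_of_free n H" "a \<in> atoms H"
  shows "f a \<in> atoms H'"
proof -
  have H: "0 \<in> H" "\<And>x y. x \<in> H \<Longrightarrow> y \<in> H \<Longrightarrow> x + y \<in> H"
    using assms(3) unfolding submonoid_of_free_def by blast+
  have "f 0 = f 0 + f 0" using assms(2)[OF H(1) H(1)] by simp
  then have f0: "f 0 = 0" by simp
  have aH: "a \<in> H" "a \<noteq> 0" using assms(4) unfolding atoms_def by blast+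
  have nonzero: "f x \<noteq> 0" if "x \<in> H" "x \<noteq> 0" for x
    using assms(1) H(1) f0 that by (metis bij_betw_imp_inj_on inj_onD)
  have "\<not> (b' \<in> H' \<and> c' \<in> H' \<and> b' \<noteq> 0 \<and> c' \<noteq> 0 \<and> f a = b' + c')" for b' c'
  proof
    assume b'c': "b' \<in> H' \<and> c' \<in> H' \<and> b' \<noteq> 0 \<and> c' \<noteq> 0 \<and> f a = b' + c'"
    define b c where "b = inv_into H f b'" and "c = inv_into H f c'"
    have bc: "b \<in> H" "c \<in> H" "f b = b'" "f c = c'"
      using assms(1) b'c' by (auto simp: b_def c_def bij_betw_def inv_into_into f_inv_into_f)
    then have "f (b + c) = f a" using assms(2) b'c' by simp
    with bc H(2) aH(1) have "a = b + c" using assms(1) by (metis bij_betw_imp_inj_on inj_onD)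
    moreover have "b \<noteq> 0" "c \<noteq> 0" using bc b'c' f0 by auto
    ultimately show False using assms(4) bc unfolding atoms_def by blast
  qed
  moreover have "f a \<in> H'" using assms(1) aH(1) by (simp add: bij_betw_apply)
  ultimately show ?thesis using nonzero aH unfolding atoms_def by blast
qed

definition unique_sums_of_two_atoms :: "(nat \<Rightarrow> nat) set \<Rightarrow> bool" where
  "unique_sums_of_two_atoms H \<longleftrightarrow>
     (\<forall>a\<in>atoms H. \<forall>b\<in>atoms H. \<forall>c\<in>atoms H. \<forall>e\<in>atoms H. a + b = c + e \<longrightarrow> a = c \<or> a = e)"

lemma unique_sums_of_two_atoms_iso:
  assumes "monoid_iso H H'" "submonoid_of_free n H" "submonoid_of_free n' H'"
    and "unique_sums_of_two_atoms H"
  shows "unique_sums_of_two_atoms H'"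
  unfolding unique_sums_of_two_atoms_def
proof (intro ballI impI)
  obtain g where g: "bij_betw g H' H" "\<And>x y. x \<in> H' \<Longrightarrow> y \<in> H' \<Longrightarrow> g (x + y) = g x + g y"
    using monoid_iso_sym[OF assms(1,2)] unfolding monoid_iso_def by blast
  note g_atom = additive_bij_image_atom[OF g assms(3)]
  fix a b c e assume atoms: "a \<in> atoms H'" "b \<in> atoms H'" "c \<in> atoms H'" "e \<in> atoms H'"
    and "a + b = c + e"
  then have "a \<in> H'" "b \<in> H'" "c \<in> H'" "e \<in> H'" unfolding atoms_def by blast+
  with g(2) \<open>a + b = c + e\<close> have "g a + g b = g c + g e" by metis
  with assms(4) atoms g_atom have "g a = g c \<or> g a = g e"
    unfolding unique_sums_of_two_atoms_def by blast
  with g(1) \<open>a \<in> H'\<close> \<open>c \<in> H'\<close> \<open>e \<in> H'\<close> show "a = c \<or> a = e"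
    by (metis bij_betw_imp_inj_on inj_onD)
qed

definition free_monoid :: "nat \<Rightarrow> (nat \<Rightarrow> nat) set" where
  "free_monoid d = {x. \<forall>i\<ge>d. x i = 0}"

definition unit_vec :: "nat \<Rightarrow> nat \<Rightarrow> nat" where
  "unit_vec j = (\<lambda>i. if i = j then 1 else 0)"

lemma free_monoid_support: "x \<in> free_monoid d \<Longrightarrow> x i \<noteq> 0 \<Longrightarrow> i < d"
  by (rule ccontr) (simp add: free_monoid_def)

lemma unit_vec_nonzero [simp]: "unit_vec j \<noteq> 0"
  by (auto simp: unit_vec_def fun_eq_iff)

lemma unit_vec_mem_free_monoid: "j < d \<Longrightarrow> unit_vec j \<in> free_monoid d"
  by (simp add: unit_vec_def free_monoid_def)

lemma total_degree_unit_vec: "j < d \<Longrightarrow> total_degree d (unit_vec j) = 1"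
  by (simp add: unit_vec_def total_degree_def)

lemma submonoid_free_monoid: "submonoid_of_free d (free_monoid d)"
  unfolding submonoid_of_free_def free_monoid_def by auto

lemma in_C_free_monoid: "in_C d (free_monoid d)"
  unfolding in_C_def
proof (intro conjI exI)
  show "has_rank (free_monoid d) d"
    by (rule has_rank_if_meets_all_axes[OF submonoid_free_monoid], rule bexI[of _ "unit_vec _"])
      (auto simp: unit_vec_def free_monoid_def)
qed (rule submonoid_free_monoid)

lemma atoms_free_monoid: "atoms (free_monoid d) = unit_vec ` {..<d}"
proof
  show "atoms (free_monoid d) \<subseteq> unit_vec ` {..<d}"
  proof
    fix a assume a: "a \<in> atoms (free_monoid d)"
    then have "a \<in> free_monoid d" "a \<noteq> 0" unfolding atoms_def by auto
    then obtain i where i: "i < d" "a i \<noteq> 0"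
      unfolding free_monoid_def using nonzero_coordE by blast
    then have "unit_vec i \<le> a" by (simp add: unit_vec_def le_fun_def)
    moreover have "a - unit_vec i \<in> free_monoid d"
      using \<open>a \<in> free_monoid d\<close> by (simp add: free_monoid_def)
    ultimately have "a = unit_vec i"
      using not_atom_if_proper_part unit_vec_mem_free_monoid[OF i(1)] a unit_vec_nonzero by metis
    with i show "a \<in> unit_vec ` {..<d}" by blast
  qed
next
  show "unit_vec ` {..<d} \<subseteq> atoms (free_monoid d)"
  proof (intro image_subsetI atom_if_minimal_weight[where w = "total_degree d"])
    show "1 \<le> total_degree d x" if "x \<in> free_monoid d" "x \<noteq> 0" for x
      using total_degree_pos that unfolding free_monoid_def by (simp add: Suc_leI)
  qed (simp_all add: total_degree_add total_degree_unit_vec unit_vec_mem_free_monoid)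
qed

lemma system_of_lengths_free_monoid:
  assumes "0 < d"
  shows "system_of_lengths (free_monoid d) = range (\<lambda>k. {k})"
proof (rule system_of_lengths_eq_singletons[where w = "total_degree d" and m = 1,
      OF submonoid_free_monoid])
  show "unit_vec 0 \<in> atoms (free_monoid d)" using assms atoms_free_monoid by blast
  show "total_degree d a = 1" if "a \<in> atoms (free_monoid d)" for a
    using that by (auto simp: atoms_free_monoid total_degree_unit_vec)
qed (simp_all add: total_degree_add)

lemma unique_sums_of_two_atoms_free_monoid: "unique_sums_of_two_atoms (free_monoid d)"
proof -
  have "unit_vec i = unit_vec k \<or> unit_vec i = unit_vec l"
    if "unit_vec i + unit_vec j = unit_vec k + unit_vec l" for i j k l
  proof -
    from that have "(unit_vec i + unit_vec j) i = (unit_vec k + unit_vec l) i" by simp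
    then show ?thesis by (auto simp: unit_vec_def split: if_splits)
  qed
  then show ?thesis unfolding unique_sums_of_two_atoms_def atoms_free_monoid by blast
qed

definition even_pair_monoid :: "nat \<Rightarrow> (nat \<Rightarrow> nat) set" where
  "even_pair_monoid d = {x \<in> free_monoid d. even (x 0 + x 1)}"

definition pair_weight :: "nat \<Rightarrow> (nat \<Rightarrow> nat) \<Rightarrow> nat" where
  "pair_weight d x = x 0 + x 1 + 2 * (\<Sum>i\<in>{2..<d}. x i)"

lemma submonoid_even_pair_monoid: "submonoid_of_free d (even_pair_monoid d)"
  unfolding submonoid_of_free_def even_pair_monoid_def free_monoid_def by auto

lemma in_C_even_pair_monoid: "in_C d (even_pair_monoid d)"
  unfolding in_C_def
proof (intro conjI exI)
  show "has_rank (even_pair_monoid d) d"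
    by (rule has_rank_if_meets_all_axes[OF submonoid_even_pair_monoid],
        rule bexI[of _ "unit_vec _ + unit_vec _"])
      (auto simp: unit_vec_def even_pair_monoid_def free_monoid_def)
qed (rule submonoid_even_pair_monoid)

lemma even_pair_monoid_diff:
  assumes "x \<in> even_pair_monoid d" "y \<in> even_pair_monoid d" "y \<le> x"
  shows "x - y \<in> even_pair_monoid d"
proof -
  have eq: "(x - y) 0 + (x - y) 1 = (x 0 + x 1) - (y 0 + y 1)"
    and le: "y 0 + y 1 \<le> x 0 + x 1"
    using assms(3) by (simp_all add: le_fun_def add_mono)
  have "even ((x - y) 0 + (x - y) 1)"
    unfolding eq using le assms(1,2) by (simp add: even_pair_monoid_def)
  moreover have "x - y \<in> free_monoid d"
    using assms(1) by (simp add: even_pair_monoid_def free_monoid_def)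
  ultimately show ?thesis unfolding even_pair_monoid_def by blast
qed

lemma pair_weight_add: "pair_weight d (x + y) = pair_weight d x + pair_weight d y"
  by (simp add: pair_weight_def sum.distrib)

lemma even_pair_weight: "x \<in> even_pair_monoid d \<Longrightarrow> even (pair_weight d x)"
  by (simp add: pair_weight_def even_pair_monoid_def)

lemma pair_weight_ge_two:
  assumes "x \<in> even_pair_monoid d" "x \<noteq> 0"
  shows "2 \<le> pair_weight d x"
proof -
  obtain i where i: "i < d" "x i \<noteq> 0"
    using assms nonzero_coordE unfolding even_pair_monoid_def free_monoid_def by blast
  have "0 < pair_weight d x"
  proof (cases "i \<le> 1")
    case True
    with i show ?thesis by (cases i) (auto simp: pair_weight_def)
  next
    case False
    with i have "x i \<le> (\<Sum>i\<in>{2..<d}. x i)" by (intro member_le_sum) auto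
    with i show ?thesis by (simp add: pair_weight_def)
  qed
  with even_pair_weight[OF assms(1)] show ?thesis by (auto elim: evenE)
qed

lemma even_pair_monoid_heavy_has_part:
  assumes "a \<in> even_pair_monoid d" "4 \<le> pair_weight d a"
  obtains y where "y \<in> even_pair_monoid d" "y \<le> a" "pair_weight d y = 2"
proof -
  have supp: "i < d" if "a i \<noteq> 0" for i
    using assms(1) that free_monoid_support unfolding even_pair_monoid_def by blast
  consider (high) i where "i \<in> {2..<d}" "a i \<noteq> 0" | (low0) "2 \<le> a 0" | (low1) "2 \<le> a 1"
    | (light) "\<forall>i\<in>{2..<d}. a i = 0" "a 0 \<le> 1" "a 1 \<le> 1"
    by fastforce
  then show ?thesis
  proof cases
    case high
    then show ?thesis
      by (intro that[of "unit_vec i"])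
        (auto simp: unit_vec_def even_pair_monoid_def free_monoid_def le_fun_def pair_weight_def)
  next
    case low0
    with supp[of 0] show ?thesis
      by (intro that[of "unit_vec 0 + unit_vec 0"])
        (auto simp: unit_vec_def even_pair_monoid_def free_monoid_def le_fun_def pair_weight_def)
  next
    case low1
    with supp[of 1] show ?thesis
      by (intro that[of "unit_vec 1 + unit_vec 1"])
        (auto simp: unit_vec_def even_pair_monoid_def free_monoid_def le_fun_def pair_weight_def)
  next
    case light
    with assms(2) show ?thesis by (simp add: pair_weight_def)
  qed
qed

lemma atoms_even_pair_monoid:
  "atoms (even_pair_monoid d) = {x \<in> even_pair_monoid d. x \<noteq> 0 \<and> pair_weight d x = 2}"
proof
  show "atoms (even_pair_monoid d) \<subseteq> {x \<in> even_pair_monoid d. x \<noteq> 0 \<and> pair_weight d x = 2}"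
  proof
    fix a assume a: "a \<in> atoms (even_pair_monoid d)"
    then have aH: "a \<in> even_pair_monoid d" "a \<noteq> 0" unfolding atoms_def by auto
    have "pair_weight d a = 2"
    proof (rule ccontr)
      assume "pair_weight d a \<noteq> 2"
      moreover have "2 \<le> pair_weight d a" by (rule pair_weight_ge_two[OF aH])
      moreover have "even (pair_weight d a)" by (rule even_pair_weight[OF aH(1)])
      ultimately have heavy: "4 \<le> pair_weight d a" by (auto elim!: evenE)
      obtain y where y: "y \<in> even_pair_monoid d" "y \<le> a" "pair_weight d y = 2"
        using even_pair_monoid_heavy_has_part[OF aH(1) heavy] .
      have "y \<noteq> 0" using y(3) by (auto simp: pair_weight_def)
      moreover have "y \<noteq> a" using y(3) heavy by auto
      ultimately have "a \<notin> atoms (even_pair_monoid d)"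
        using not_atom_if_proper_part[OF y(1) even_pair_monoid_diff[OF aH(1) y(1,2)] y(2)] by blast
      with a show False by contradiction
    qed
    with aH show "a \<in> {x \<in> even_pair_monoid d. x \<noteq> 0 \<and> pair_weight d x = 2}" by blast
  qed
next
  show "{x \<in> even_pair_monoid d. x \<noteq> 0 \<and> pair_weight d x = 2} \<subseteq> atoms (even_pair_monoid d)"
  proof (intro subsetI atom_if_minimal_weight[where w = "pair_weight d"])
    show "pair_weight d (x + y) = pair_weight d x + pair_weight d y" for x y
      by (rule pair_weight_add)
    show "2 \<le> pair_weight d x" if "x \<in> even_pair_monoid d" "x \<noteq> 0" for x
      using that by (rule pair_weight_ge_two)
  qed auto
qed

lemma unit_vec_sum_mem_atoms_even_pair_monoid:
  assumes "j < min 2 d" "k < min 2 d"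
  shows "unit_vec j + unit_vec k \<in> atoms (even_pair_monoid d)"
  unfolding atoms_even_pair_monoid using assms
  by (auto simp: unit_vec_def even_pair_monoid_def free_monoid_def pair_weight_def fun_eq_iff)

lemma system_of_lengths_even_pair_monoid:
  assumes "0 < d"
  shows "system_of_lengths (even_pair_monoid d) = range (\<lambda>k. {k})"
proof (rule system_of_lengths_eq_singletons[where w = "pair_weight d" and m = 2,
      OF submonoid_even_pair_monoid])
  show "unit_vec 0 + unit_vec 0 \<in> atoms (even_pair_monoid d)"
    using assms by (intro unit_vec_sum_mem_atoms_even_pair_monoid) auto
qed (auto simp: pair_weight_add atoms_even_pair_monoid)

lemma not_unique_sums_of_two_atoms_even_pair_monoid:
  assumes "2 \<le> d"
  shows "\<not> unique_sums_of_two_atoms (even_pair_monoid d)"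
proof -
  let ?u = "unit_vec 0 + unit_vec 1"
  let ?p = "unit_vec 0 + unit_vec 0" and ?q = "unit_vec 1 + unit_vec 1"
  have "?u \<in> atoms (even_pair_monoid d)" "?p \<in> atoms (even_pair_monoid d)"
    "?q \<in> atoms (even_pair_monoid d)"
    using assms by (auto intro: unit_vec_sum_mem_atoms_even_pair_monoid)
  moreover have "?u + ?u = ?p + ?q" "?u \<noteq> ?p" "?u \<noteq> ?q"
    by (auto simp: unit_vec_def fun_eq_iff)
  ultimately show ?thesis unfolding unique_sums_of_two_atoms_def by blast
qed

theorem proposition4p10:
  fixes d :: nat
  assumes "d \<ge> 2"
  shows "\<exists>H H' :: (nat \<Rightarrow> nat) set. in_C d H \<and> in_C d H' \<and>
           system_of_lengths H = system_of_lengths H' \<and> \<not> monoid_iso H H'"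
proof (intro exI conjI)
  show "in_C d (free_monoid d)" "in_C d (even_pair_monoid d)"
    by (rule in_C_free_monoid, rule in_C_even_pair_monoid)
  show "system_of_lengths (free_monoid d) = system_of_lengths (even_pair_monoid d)"
    using assms by (simp add: system_of_lengths_free_monoid system_of_lengths_even_pair_monoid)
  show "\<not> monoid_iso (free_monoid d) (even_pair_monoid d)"
    using unique_sums_of_two_atoms_iso[OF _ submonoid_free_monoid submonoid_even_pair_monoid
        unique_sums_of_two_atoms_free_monoid] not_unique_sums_of_two_atoms_even_pair_monoid assms
    by blast
qed

end
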